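(* Let $t,k,\ell$ be positive integers with $t<k$, let $\mathbb{F}$ be a finite field, and let $b$ be an integer with $b>\ell/k$. There is a black-box transformation with parameters $(t,k,k_0=\binom{k}{t},\ell,\mathbb{F})$ whose associated LMSSS $\mathcal{L}$ has every party's share in $\mathbb{F}^b$ (hence information rate $\ell/(kb)$) if and only if there is an $\mathbb{F}$-linear code $C\subseteq(\mathbb{F}^b)^k$ with rate at least $\ell/(kb)$ and distance at least $t+1$. Moreover, in the "if" direction the transformation can be chosen with $c_j=\ell\binom{k-1}{t}$ for every $j\in[k]$.
   Context: A $k$-party $\ell$-LMSSS over $\mathbb{F}$: an $\mathbb{F}$-linear map $\mathsf{Share}:\mathbb{F}^\ell\times\mathbb{F}^e\to\mathbb{F}^{b_1}\times\dots\times\mathbb{F}^{b_k}$ together with an access structure $\Gamma$ (sets that can linearly recover the secret from their shares) and adversary structure $\mathcal{T}$ (sets whose shares, for uniform randomness, have a distribution independent of the secret); information rate $\ell/\sum_jb_j$. Black-box transformation with parameters $(t,k,k_0,\ell,\mathbb{F})$: a $k$-party $\ell$-LMSSS $\mathcal{L}=(\mathsf{Share}_\mathcal{L},\mathsf{Rec}_\mathcal{L})$ over $\mathbb{F}$ with parameters $(e,b_1,\dots,b_k)$ (all $k$ parties together qualified), replication functions $\psi_i:[k_0]\to2^{[k]}$ ($i\in[\ell]$) and conversion functions $\varphi_j:\mathbb{F}^{c_j}\to\mathbb{F}^{b_j}$, $c_j=\sum_{i=1}^\ell|\{v\in[k_0]:j\in\psi_i(v)\}|$, such that for every $(y_i^{(v)})_{i\in[\ell],v\in[k_0]}$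 there is $\mathbf{r}$ with $(\varphi_j(\mathbf{Y}(j)))_{j}=\mathsf{Share}_\mathcal{L}((\sum_vy_1^{(v)},\dots,\sum_vy_\ell^{(v)}),\mathbf{r})$ where $\mathbf{Y}(j)=(y_i^{(v)})_{i,v:\,j\in\psi_i(v)}$, and for every $T\subseteq[k]$ with $|T|\le t$ and $i\in[\ell]$, $|\bigcup_{j\in T}\{v:j\in\psi_i(v)\}|\le k_0-1$. Its rate is the information rate of $\mathcal{L}$. $\mathbb{F}$-linear code $C\subseteq(\mathbb{F}^b)^k$: $\mathbb{F}$-subspace; rate $\dim_{\mathbb{F}}C/(bk)$; distance = minimum number of coordinates in $[k]$ where two distinct codewords differ. *)

theory Defs
  imports Complex_Main "HOL-Library.Function_Algebras"
begin

(* Vectors in F^n are represented as functions nat => 'f vanishing outside {0..<n}.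
   Parties, secret coordinates, replication indices are 0-based: [k] = {0..<k}. *)
definition fvec :: "nat \<Rightarrow> (nat \<Rightarrow> 'f::zero) set" where
  "fvec n = {v. \<forall>i\<ge>n. v i = 0}"

definition lmsss_linear ::
  "nat \<Rightarrow> nat \<Rightarrow> nat \<Rightarrow> (nat \<Rightarrow> nat) \<Rightarrow>
   ((nat \<Rightarrow> 'f::field) \<Rightarrow> (nat \<Rightarrow> 'f) \<Rightarrow> nat \<Rightarrow> nat \<Rightarrow> 'f) \<Rightarrow> bool" where
  "lmsss_linear l e k b Share \<longleftrightarrow>
     (\<forall>s r. s \<in> fvec l \<longrightarrow> r \<in> fvec e \<longrightarrow> (\<forall>j<k. Share s r j \<in> fvec (b j))) \<and>
     (\<forall>c s r s' r'. s \<in> fvec l \<longrightarrow> r \<in> fvec e \<longrightarrow> s' \<in> fvec l \<longrightarrow> r' \<in> fvec e \<longrightarrow>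
        (\<forall>j<k. Share (\<lambda>i. c * s i + s' i) (\<lambda>i. c * r i + r' i) j
               = (\<lambda>m. c * Share s r j m + Share s' r' j m)))"

definition all_parties_qualified ::
  "nat \<Rightarrow> nat \<Rightarrow> nat \<Rightarrow> (nat \<Rightarrow> nat) \<Rightarrow>
   ((nat \<Rightarrow> 'f::field) \<Rightarrow> (nat \<Rightarrow> 'f) \<Rightarrow> nat \<Rightarrow> nat \<Rightarrow> 'f) \<Rightarrow> bool" where
  "all_parties_qualified l e k b Share \<longleftrightarrow>
     (\<exists>coef::nat \<Rightarrow> nat \<Rightarrow> nat \<Rightarrow> 'f. \<forall>s r. s \<in> fvec l \<longrightarrow> r \<in> fvec e \<longrightarrow>
        (\<forall>i<l. s i = (\<Sum>j<k. \<Sum>m<b j. coef i j m * Share s r j m)))"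

definition conv_input_len :: "nat \<Rightarrow> nat \<Rightarrow> (nat \<Rightarrow> nat \<Rightarrow> nat set) \<Rightarrow> nat \<Rightarrow> nat" where
  "conv_input_len l k0 \<psi> j = card {(i, v). i < l \<and> v < k0 \<and> j \<in> \<psi> i v}"

(* Y(j) = (y_i^(v))_{i,v : j in psi_i(v)}, represented as a function on the index pairs
   (i,v) with j in psi_i(v) (zero elsewhere); this is F^{c_j} up to a fixed reindexing. *)
definition conv_input ::
  "nat \<Rightarrow> nat \<Rightarrow> (nat \<Rightarrow> nat \<Rightarrow> nat set) \<Rightarrow> (nat \<Rightarrow> nat \<Rightarrow> 'f::zero) \<Rightarrow> nat \<Rightarrow> nat \<times> nat \<Rightarrow> 'f" where
  "conv_input l k0 \<psi> y j = (\<lambda>(i, v). if i < l \<and> v < k0 \<and> j \<in> \<psi> i v then y i v else 0)"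

(* Black-box transformation with parameters (t,k,k0,l,F), with explicit LMSSS data
   (e, b, Share), replication functions psi and conversion functions phi. *)
definition black_box_transformation ::
  "nat \<Rightarrow> nat \<Rightarrow> nat \<Rightarrow> nat \<Rightarrow> nat \<Rightarrow> (nat \<Rightarrow> nat) \<Rightarrow>
   ((nat \<Rightarrow> 'f::field) \<Rightarrow> (nat \<Rightarrow> 'f) \<Rightarrow> nat \<Rightarrow> nat \<Rightarrow> 'f) \<Rightarrow>
   (nat \<Rightarrow> nat \<Rightarrow> nat set) \<Rightarrow> (nat \<Rightarrow> (nat \<times> nat \<Rightarrow> 'f) \<Rightarrow> nat \<Rightarrow> 'f) \<Rightarrow> bool" where
  "black_box_transformation t k k0 l e b Share \<psi> \<phi> \<longleftrightarrow>
     lmsss_linear l e k b Share \<and>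
     all_parties_qualified l e k b Share \<and>
     (\<forall>i<l. \<forall>v<k0. \<psi> i v \<subseteq> {0..<k}) \<and>
     (\<forall>y :: nat \<Rightarrow> nat \<Rightarrow> 'f. \<exists>r \<in> fvec e. \<forall>j<k.
        \<phi> j (conv_input l k0 \<psi> y j) = Share (\<lambda>i. if i < l then \<Sum>v<k0. y i v else 0) r j) \<and>
     (\<forall>T \<subseteq> {0..<k}. card T \<le> t \<longrightarrow> (\<forall>i<l.
        card (\<Union>j\<in>T. {v. v < k0 \<and> j \<in> \<psi> i v}) \<le> k0 - 1))"

definition code_space :: "nat \<Rightarrow> nat \<Rightarrow> (nat \<Rightarrow> nat \<Rightarrow> 'f::zero) set" where
  "code_space k b = {x. (\<forall>j<k. x j \<in> fvec b) \<and> (\<forall>j\<ge>k. x j = 0)}"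

definition code_scale :: "'f::field \<Rightarrow> (nat \<Rightarrow> nat \<Rightarrow> 'f) \<Rightarrow> nat \<Rightarrow> nat \<Rightarrow> 'f" where
  "code_scale c x = (\<lambda>j m. c * x j m)"

definition linear_code :: "nat \<Rightarrow> nat \<Rightarrow> (nat \<Rightarrow> nat \<Rightarrow> 'f::field) set \<Rightarrow> bool" where
  "linear_code k b C \<longleftrightarrow> C \<subseteq> code_space k b \<and> 0 \<in> C \<and>
     (\<forall>x\<in>C. \<forall>y\<in>C. x + y \<in> C) \<and> (\<forall>c. \<forall>x\<in>C. code_scale c x \<in> C)"

definition code_rate :: "nat \<Rightarrow> nat \<Rightarrow> (nat \<Rightarrow> nat \<Rightarrow> 'f::field) set \<Rightarrow> real" where
  "code_rate k b C = real (vector_space.dim code_scale C) / real (b * k)"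

definition code_distance_ge :: "nat \<Rightarrow> (nat \<Rightarrow> nat \<Rightarrow> 'f) set \<Rightarrow> nat \<Rightarrow> bool" where
  "code_distance_ge k C d \<longleftrightarrow> (\<forall>x\<in>C. \<forall>y\<in>C. x \<noteq> y \<longrightarrow> d \<le> card {j. j < k \<and> x j \<noteq> y j})"

end

theory Submission
  imports Defs
begin

(* Both sides are equivalent to the existence of l words g_0, ..., g_(l-1) in (F^b)^k that stay
   linearly independent after deleting any t of the k blocks.

   A transformation yields such words as its recovery coefficients: place a unit secret in a
   replica of coordinate i that no party of a t-set T holds.  The shares of this sharing and of
   the zero sharing agree on T, so their difference pairs to 0 with any combination of the g's
   vanishing outside T, but to the indicator of i with the g's themselves; hence such a
   combination is trivial.  The span of the g's is then a code of dimension l and distance at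
   least t + 1.

   Conversely, l independent codewords of a code of distance at least t + 1 are such words, so
   for every t-set S there are dual words, biorthogonal to the g's, vanishing on S.  Replicate
   each secret coordinate once for every t-set S, hand the replica to the parties outside S,
   and let each party convert its replicas into the corresponding dual words: the shares of all
   parties then pair with the g's to the secret, while any t parties miss the replica indexed
   by a t-set containing them. *)

section \<open>Dual bases\<close>

definition dot_on :: "'x set \<Rightarrow> ('x \<Rightarrow> 'f) \<Rightarrow> ('x \<Rightarrow> 'f) \<Rightarrow> 'f::comm_ring_1" where
  "dot_on J f g = (\<Sum>x\<in>J. f x * g x)"

lemma dot_on_diff_right: "dot_on J f (\<lambda>x. g x - h x) = dot_on J f g - dot_on J f h"
  by (simp add: dot_on_def right_diff_distrib sum_subtractf)

lemma dot_on_scale_right: "dot_on J f (\<lambda>x. c * g x) = c * dot_on J f g"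
  by (simp add: dot_on_def sum_distrib_left mult.left_commute)

lemma dot_on_sum_right: "dot_on J f (\<lambda>x. \<Sum>i\<in>I. g i x) = (\<Sum>i\<in>I. dot_on J f (g i))"
  by (simp add: dot_on_def sum_distrib_left sum.swap[of _ J])

lemma dot_on_indicator_right:
  "finite J \<Longrightarrow> x \<in> J \<Longrightarrow> dot_on J f (\<lambda>y. if y = x then 1 else 0) = f x"
  by (simp add: dot_on_def if_distrib[of "\<lambda>c. _ * c"] cong: if_cong)

lemma dual_basis_exists:
  fixes \<rho> :: "nat \<Rightarrow> 'x \<Rightarrow> 'f::field"
  assumes "finite J"
    and "\<And>a. \<forall>x\<in>J. (\<Sum>i<n. a i * \<rho> i x) = 0 \<Longrightarrow> \<forall>i<n. a i = 0"
  shows "\<exists>w. \<forall>i<n. \<forall>i'<n. dot_on J (\<rho> i) (w i') = (if i = i' then 1 else 0)"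
  using assms(2)
proof (induction n)
  case 0
  then show ?case by simp
next
  case (Suc n)
  have "\<forall>i<n. a i = 0" if "\<forall>x\<in>J. (\<Sum>i<n. a i * \<rho> i x) = 0" for a
  proof -
    have "\<forall>x\<in>J. (\<Sum>i<Suc n. (if i < n then a i else 0) * \<rho> i x) = 0"
      using that by simp
    from Suc.prems[OF this] show ?thesis by (metis less_SucI)
  qed
  then obtain w where w: "\<And>i i'. i < n \<Longrightarrow> i' < n \<Longrightarrow> dot_on J (\<rho> i) (w i') = (if i = i' then 1 else 0)"
    using Suc.IH by blast
  define d where "d i = dot_on J (\<rho> n) (w i)" for i
  \<comment> \<open>otherwise \<rho> n would agree on J with the combination of the \<rho> i with coefficients d\<close>
  obtain x where x: "x \<in> J" "\<rho> n x \<noteq> (\<Sum>i<n. d i * \<rho> i x)"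
  proof (rule ccontr)
    assume "\<not> thesis"
    with that have "\<forall>x\<in>J. (\<Sum>i<Suc n. (if i < n then d i else - 1) * \<rho> i x) = 0"
      by fastforce
    from Suc.prems[OF this] show False by auto
  qed
  define c where "c = \<rho> n x - (\<Sum>i<n. d i * \<rho> i x)"
  have "c \<noteq> 0" using x(2) by (simp add: c_def)
  define z where "z y = inverse c * ((if y = x then 1 else 0) - (\<Sum>i<n. \<rho> i x * w i y))" for y
  have dot_z: "dot_on J (\<rho> i) z = inverse c * (\<rho> i x - (\<Sum>i'<n. \<rho> i' x * dot_on J (\<rho> i) (w i')))"
    for i
    unfolding z_def dot_on_scale_right dot_on_diff_right dot_on_sum_right
    by (simp add: dot_on_indicator_right assms(1) x(1))
  have z_below: "dot_on J (\<rho> i) z = 0" if "i < n" for i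
  proof -
    have "(\<Sum>i'<n. \<rho> i' x * dot_on J (\<rho> i) (w i')) = \<rho> i x"
      using that by (simp add: w if_distrib[of "\<lambda>c. _ * c"] cong: if_cong)
    then show ?thesis by (simp add: dot_z)
  qed
  have z_top: "dot_on J (\<rho> n) z = 1"
    using \<open>c \<noteq> 0\<close> by (simp add: dot_z d_def c_def mult.commute)
  define w' where "w' i = (if i < n then (\<lambda>y. w i y - d i * z y) else z)" for i
  have "dot_on J (\<rho> i) (w' i') = (if i = i' then 1 else 0)" if "i < Suc n" "i' < Suc n" for i i'
    using that by (cases "i < n"; cases "i' < n")
      (auto simp: less_Suc_eq w'_def dot_on_diff_right dot_on_scale_right w z_below z_top d_def)
  then show ?case by blast
qed

section \<open>Puncture-independent words and the codes they span\<close>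

definition word_dot :: "nat \<Rightarrow> nat \<Rightarrow> (nat \<Rightarrow> nat \<Rightarrow> 'f) \<Rightarrow> (nat \<Rightarrow> nat \<Rightarrow> 'f) \<Rightarrow> 'f::comm_ring_1"
  where "word_dot k b x u = (\<Sum>j<k. \<Sum>m<b. x j m * u j m)"

lemma word_dot_as_dot_on:
  "word_dot k b x u = dot_on ({..<k} \<times> {..<b}) (\<lambda>p. x (fst p) (snd p)) (\<lambda>p. u (fst p) (snd p))"
  by (simp add: word_dot_def dot_on_def sum.cartesian_product case_prod_beta)

lemma word_dot_add_right:
  "word_dot k b x (\<lambda>j m. u j m + u' j m) = word_dot k b x u + word_dot k b x u'"
  by (simp add: word_dot_def distrib_left sum.distrib)

lemma word_dot_diff_right:
  "word_dot k b x (\<lambda>j m. u j m - u' j m) = word_dot k b x u - word_dot k b x u'"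
  by (simp add: word_dot_def right_diff_distrib sum_subtractf)

lemma word_dot_scale_right: "word_dot k b x (\<lambda>j m. c * u j m) = c * word_dot k b x u"
  by (simp add: word_dot_def sum_distrib_left mult.left_commute)

lemma word_dot_sum_right:
  "word_dot k b x (\<lambda>j m. \<Sum>i\<in>I. u i j m) = (\<Sum>i\<in>I. word_dot k b x (u i))"
  by (simp add: word_dot_as_dot_on dot_on_sum_right)

definition lincomb ::
  "nat \<Rightarrow> nat \<Rightarrow> nat \<Rightarrow> (nat \<Rightarrow> nat \<Rightarrow> nat \<Rightarrow> 'f) \<Rightarrow> (nat \<Rightarrow> 'f) \<Rightarrow> nat \<Rightarrow> nat \<Rightarrow> 'f::comm_ring_1"
  where "lincomb k b l g a = (\<lambda>j m. if j < k \<and> m < b then \<Sum>i<l. a i * g i j m else 0)"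

lemma word_dot_lincomb_left:
  "word_dot k b (lincomb k b l g a) u = (\<Sum>i<l. a i * word_dot k b (g i) u)"
  by (simp add: word_dot_def lincomb_def sum_distrib_left sum_distrib_right mult.assoc
      sum.swap[of _ "{..<l}"])

lemma lincomb_diff:
  "lincomb k b l g (\<lambda>i. a i - a' i) j m = lincomb k b l g a j m - lincomb k b l g a' j m"
  by (simp add: lincomb_def left_diff_distrib sum_subtractf)

lemma lincomb_in_code_space: "lincomb k b l g a \<in> code_space k b"
  by (simp add: lincomb_def code_space_def fvec_def fun_eq_iff)

definition puncture_independent ::
  "nat \<Rightarrow> nat \<Rightarrow> nat \<Rightarrow> nat \<Rightarrow> (nat \<Rightarrow> nat \<Rightarrow> nat \<Rightarrow> 'f::comm_ring_1) \<Rightarrow> bool"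
  where "puncture_independent k b t l g \<longleftrightarrow>
    (\<forall>T a. T \<subseteq> {..<k} \<longrightarrow> card T \<le> t \<longrightarrow> (\<forall>j. j \<notin> T \<longrightarrow> lincomb k b l g a j = 0) \<longrightarrow>
       (\<forall>i<l. a i = 0))"

lemma puncture_independent_imp_independent:
  "puncture_independent k b t l g \<Longrightarrow> lincomb k b l g a = 0 \<Longrightarrow> \<forall>i<l. a i = 0"
  unfolding puncture_independent_def by (metis card.empty empty_iff empty_subsetI le0 zero_fun_def)

interpretation code_vs: vector_space "code_scale :: 'f::field \<Rightarrow> (nat \<Rightarrow> nat \<Rightarrow> 'f) \<Rightarrow> _"
  by unfold_locales (auto simp: code_scale_def fun_eq_iff algebra_simps)

lemma code_scale_sum_apply:
  "(\<Sum>i\<in>I. code_scale (a i) (x i)) j m = (\<Sum>i\<in>I. a i * x i j m)"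
  by (induction I rule: infinite_finite_induct) (auto simp: code_scale_def)

lemma linear_code_imp_subspace: "linear_code k b C \<Longrightarrow> code_vs.subspace C"
  by (simp add: linear_code_def code_vs.subspace_def)

lemma linear_code_range_lincomb: "linear_code k b (range (lincomb k b l g))"
  unfolding linear_code_def
proof (intro conjI ballI allI subsetI)
  show "x \<in> code_space k b" if "x \<in> range (lincomb k b l g)" for x
    using that lincomb_in_code_space by blast
  show "0 \<in> range (lincomb k b l g)"
    by (rule range_eqI[of _ _ "\<lambda>_. 0"]) (simp add: lincomb_def fun_eq_iff)
  show "x + y \<in> range (lincomb k b l g)"
    if "x \<in> range (lincomb k b l g)" "y \<in> range (lincomb k b l g)" for x y
  proof -
    from that obtain a a' where "x = lincomb k b l g a" "y = lincomb k b l g a'" by blast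
    then have "x + y = lincomb k b l g (\<lambda>i. a i + a' i)"
      by (simp add: lincomb_def fun_eq_iff distrib_right sum.distrib)
    then show ?thesis by blast
  qed
  show "code_scale c x \<in> range (lincomb k b l g)" if "x \<in> range (lincomb k b l g)" for c x
  proof -
    from that obtain a where "x = lincomb k b l g a" by blast
    then have "code_scale c x = lincomb k b l g (\<lambda>i. c * a i)"
      by (simp add: lincomb_def code_scale_def fun_eq_iff sum_distrib_left mult.assoc)
    then show ?thesis by blast
  qed
qed

lemma lincomb_eq_sum_units:
  fixes g :: "nat \<Rightarrow> nat \<Rightarrow> nat \<Rightarrow> 'f::field"
  shows "lincomb k b l g a = (\<Sum>i<l. code_scale (a i) (lincomb k b l g (\<lambda>i'. if i' = i then 1 else 0)))"
proof (intro ext)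
  fix j m
  have unit: "lincomb k b l g (\<lambda>i'. if i' = i then 1 else 0) j m = (if j < k \<and> m < b then g i j m else 0)"
    if "i < l" for i
    using that by (simp add: lincomb_def if_distrib[of "\<lambda>c. c * _"] cong: if_cong)
  show "lincomb k b l g a j m = (\<Sum>i<l. code_scale (a i) (lincomb k b l g (\<lambda>i'. if i' = i then 1 else 0))) j m"
    unfolding code_scale_sum_apply by (simp add: unit cong: sum.cong_simp) (auto simp: lincomb_def)
qed

lemma dim_range_lincomb:
  fixes g :: "nat \<Rightarrow> nat \<Rightarrow> nat \<Rightarrow> 'f::field"
  assumes indep: "\<And>a. lincomb k b l g a = 0 \<Longrightarrow> \<forall>i<l. a i = 0"
  shows "code_vs.dim (range (lincomb k b l g)) = l"
proof -
  define E where "E i = lincomb k b l g (\<lambda>i'. if i' = i then 1 else 0)" for i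
  have inj: "inj_on E {..<l}"
  proof (rule inj_onI)
    fix i i' assume "i \<in> {..<l}" "i' \<in> {..<l}" "E i = E i'"
    then have "lincomb k b l g (\<lambda>j. (if j = i then 1 else 0) - (if j = i' then 1 else 0)) = 0"
      by (simp add: E_def fun_eq_iff lincomb_diff)
    from indep[OF this] \<open>i \<in> {..<l}\<close> show "i = i'" by (metis lessThan_iff one_neq_zero diff_zero)
  qed
  have span: "lincomb k b l g a = (\<Sum>i<l. code_scale (a i) (E i))" for a
    unfolding E_def by (rule lincomb_eq_sum_units)
  have "code_vs.independent (E ` {..<l})"
  proof (rule code_vs.independent_if_scalars_zero)
    fix f x assume "(\<Sum>x\<in>E ` {..<l}. code_scale (f x) x) = 0" and x: "x \<in> E ` {..<l}"
    then have "lincomb k b l g (\<lambda>i. f (E i)) = 0" by (simp add: span sum.reindex[OF inj])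
    from indep[OF this] x show "f x = 0" by auto
  qed simp
  moreover have "E ` {..<l} \<subseteq> range (lincomb k b l g)" by (auto simp: E_def)
  moreover have "range (lincomb k b l g) \<subseteq> code_vs.span (E ` {..<l})"
  proof
    fix x assume "x \<in> range (lincomb k b l g)"
    then obtain a where "x = (\<Sum>i<l. code_scale (a i) (E i))" by (auto simp: span)
    also have "\<dots> \<in> code_vs.span (E ` {..<l})"
      by (intro code_vs.span_sum code_vs.span_scale code_vs.span_base) simp
    finally show "x \<in> code_vs.span (E ` {..<l})" .
  qed
  ultimately have "card (E ` {..<l}) = code_vs.dim (range (lincomb k b l g))"
    by (intro code_vs.basis_card_eq_dim)
  then show ?thesis by (simp add: card_image[OF inj])
qed

lemma code_distance_range_lincomb:
  assumes "puncture_independent k b t l g"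
  shows "code_distance_ge k (range (lincomb k b l g)) (t + 1)"
  unfolding code_distance_ge_def
proof (intro ballI impI)
  fix x y assume "x \<in> range (lincomb k b l g)" "y \<in> range (lincomb k b l g)" "x \<noteq> y"
  then obtain a a' where x: "x = lincomb k b l g a" and y: "y = lincomb k b l g a'" by blast
  let ?T = "{j. j < k \<and> x j \<noteq> y j}"
  show "t + 1 \<le> card ?T"
  proof (rule ccontr)
    assume "\<not> t + 1 \<le> card ?T"
    then have "card ?T \<le> t" by simp
    moreover have "?T \<subseteq> {..<k}" by auto
    moreover have "lincomb k b l g (\<lambda>i. a i - a' i) j = 0" if "j \<notin> ?T" for j
      using that lincomb_in_code_space[of k b l g] x y
      by (cases "j < k") (auto simp: fun_eq_iff lincomb_diff code_space_def)
    ultimately have "\<forall>i<l. a i - a' i = 0"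
      using assms unfolding puncture_independent_def by blast
    then have "x = y" unfolding x y lincomb_def by (simp add: fun_eq_iff)
    with \<open>x \<noteq> y\<close> show False ..
  qed
qed

lemma lincomb_eq_sum:
  fixes g :: "nat \<Rightarrow> nat \<Rightarrow> nat \<Rightarrow> 'f::field"
  assumes "\<forall>i<l. g i \<in> code_space k b"
  shows "lincomb k b l g a = (\<Sum>i<l. code_scale (a i) (g i))"
proof (intro ext)
  fix j m
  have "g i j m = 0" if "i < l" "\<not> (j < k \<and> m < b)" for i
    using assms that by (cases "j < k") (auto simp: code_space_def fvec_def)
  then show "lincomb k b l g a j m = (\<Sum>i<l. code_scale (a i) (g i)) j m"
    by (auto simp: lincomb_def code_scale_sum_apply)
qed

lemma independent_codewords_exist:
  fixes C :: "(nat \<Rightarrow> nat \<Rightarrow> 'f::field) set"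
  assumes "l \<le> code_vs.dim C"
  obtains g where "\<And>i. i < l \<Longrightarrow> g i \<in> C"
    and "\<And>a. (\<Sum>i<l. code_scale (a i) (g i)) = 0 \<Longrightarrow> \<forall>i<l. a i = 0"
proof -
  obtain B where B: "B \<subseteq> C" "code_vs.independent B" "card B = code_vs.dim C"
    using code_vs.basis_exists by metis
  obtain B' where B': "B' \<subseteq> B" "card B' = l" "finite B'"
    using obtain_subset_with_card_n[of l B] assms B(3) by metis
  obtain g where g: "bij_betw g {..<l} B'"
    using ex_bij_betw_nat_finite[OF B'(3)] B'(2) by (auto simp: atLeast0LessThan)
  then have inj: "inj_on g {..<l}" and B'_image: "B' = g ` {..<l}" by (simp_all add: bij_betw_def)
  have "\<forall>i<l. a i = 0" if "(\<Sum>i<l. code_scale (a i) (g i)) = 0" for a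
  proof -
    define u where "u v = a (the_inv_into {..<l} g v)" for v
    have "(\<Sum>v\<in>B'. code_scale (u v) v) = (\<Sum>i<l. code_scale (a i) (g i))"
      unfolding B'_image by (simp add: sum.reindex[OF inj] u_def the_inv_into_f_f[OF inj])
    then have "(\<Sum>v\<in>B'. code_scale (u v) v) = 0" using that by simp
    moreover have "code_vs.independent B'" using B(2) B'(1) by (rule code_vs.independent_mono)
    ultimately have "\<forall>v\<in>B'. u v = 0"
      using B'(3) unfolding code_vs.independent_explicit_finite_subsets by blast
    then show ?thesis by (auto simp: u_def B'_image the_inv_into_f_f[OF inj])
  qed
  moreover have "g i \<in> C" if "i < l" for i
    using B'_image B'(1) B(1) that by auto
  ultimately show ?thesis using that by blast
qed

lemma puncture_independent_of_code:
  fixes C :: "(nat \<Rightarrow> nat \<Rightarrow> 'f::field) set"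
  assumes code: "linear_code k b C" and dim: "l \<le> code_vs.dim C"
    and dist: "code_distance_ge k C (t + 1)"
  shows "\<exists>g :: nat \<Rightarrow> nat \<Rightarrow> nat \<Rightarrow> 'f. puncture_independent k b t l g"
proof -
  obtain g where gC: "\<And>i. i < l \<Longrightarrow> g i \<in> C"
    and indep: "\<And>a. (\<Sum>i<l. code_scale (a i) (g i)) = 0 \<Longrightarrow> \<forall>i<l. a i = 0"
    using independent_codewords_exist[OF dim] by blast
  have "puncture_independent k b t l g"
    unfolding puncture_independent_def
  proof (intro allI impI)
    fix T a i assume T: "T \<subseteq> {..<k}" "card T \<le> t"
      and vanish: "\<forall>j. j \<notin> T \<longrightarrow> lincomb k b l g a j = 0" and "i < l"
    have comb: "lincomb k b l g a = (\<Sum>i<l. code_scale (a i) (g i))"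
      using gC code by (intro lincomb_eq_sum) (auto simp: linear_code_def)
    have "lincomb k b l g a \<in> C"
      unfolding comb using gC linear_code_imp_subspace[OF code]
      by (intro code_vs.subspace_sum code_vs.subspace_scale) auto
    moreover have "0 \<in> C" using code by (simp add: linear_code_def)
    moreover have "card {j. j < k \<and> lincomb k b l g a j \<noteq> 0 j} \<le> t"
    proof -
      have "{j. j < k \<and> lincomb k b l g a j \<noteq> 0 j} \<subseteq> T" using vanish by auto
      then show ?thesis using T finite_subset[OF T(1)] card_mono order_trans by blast
    qed
    ultimately have "lincomb k b l g a = 0"
      using dist unfolding code_distance_ge_def by (metis Suc_eq_plus1 not_less_eq_eq)
    then show "a i = 0" using indep comb \<open>i < l\<close> by simp
  qed
  then show ?thesis by blast
qed

section \<open>From transformations to codes\<close>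

lemma privacy_vector:
  fixes Share :: "(nat \<Rightarrow> 'f::field) \<Rightarrow> (nat \<Rightarrow> 'f) \<Rightarrow> nat \<Rightarrow> nat \<Rightarrow> 'f"
  assumes bbt: "black_box_transformation t k k0 l e (\<lambda>_. b) Share \<psi> \<phi>" and "0 < k0"
    and recover: "\<And>s r i. s \<in> fvec l \<Longrightarrow> r \<in> fvec e \<Longrightarrow> i < l \<Longrightarrow>
      s i = word_dot k b (coef i) (Share s r)"
    and T: "T \<subseteq> {..<k}" "card T \<le> t" and "i0 < l"
  shows "\<exists>\<Delta>. (\<forall>j\<in>T. \<Delta> j = 0) \<and> (\<forall>i<l. word_dot k b (coef i) \<Delta> = (if i = i0 then 1 else 0))"
proof -
  define U where "U = (\<Union>j\<in>T. {v. v < k0 \<and> j \<in> \<psi> i0 v})"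
  from bbt have convert: "\<forall>y :: nat \<Rightarrow> nat \<Rightarrow> 'f. \<exists>r \<in> fvec e. \<forall>j<k.
      \<phi> j (conv_input l k0 \<psi> y j) = Share (\<lambda>i. if i < l then \<Sum>v<k0. y i v else 0) r j"
    and "card U \<le> k0 - 1"
    using T \<open>i0 < l\<close> unfolding black_box_transformation_def atLeast0LessThan U_def by auto
  moreover have "U \<subseteq> {..<k0}" by (auto simp: U_def)
  ultimately have "\<not> {..<k0} \<subseteq> U"
    using \<open>0 < k0\<close> card_mono[of U "{..<k0}"] by (metis card_lessThan diff_less finite_lessThan
      less_one not_le subset_antisym)
  then obtain v0 where v0: "v0 < k0" "\<forall>j\<in>T. j \<notin> \<psi> i0 v0" by (auto simp: U_def)
  \<comment> \<open>no party of T holds replica v0 of coordinate i0, so a unit placed there is invisible to T\<close>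
  define y :: "nat \<Rightarrow> nat \<Rightarrow> 'f" where "y i v = (if i = i0 \<and> v = v0 then 1 else 0)" for i v
  define s where "s i = (if i = i0 then 1 else 0 :: 'f)" for i
  have "(\<lambda>i. if i < l then \<Sum>v<k0. y i v else 0) = s"
    using \<open>i0 < l\<close> v0(1) by (auto simp: y_def s_def fun_eq_iff)
  then obtain r where r: "r \<in> fvec e" "\<forall>j<k. \<phi> j (conv_input l k0 \<psi> y j) = Share s r j"
    using convert by metis
  obtain r0 where r0: "r0 \<in> fvec e" "\<forall>j<k. \<phi> j (conv_input l k0 \<psi> (\<lambda>_ _. 0) j) = Share (\<lambda>_. 0) r0 j"
    using convert[rule_format, of "\<lambda>_ _. 0"] by (simp add: if_distrib cong: if_cong) blast
  have "Share s r j = Share (\<lambda>_. 0) r0 j" if "j \<in> T" for j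
  proof -
    have "conv_input l k0 \<psi> y j = conv_input l k0 \<psi> (\<lambda>_ _. 0) j"
      using v0 that by (auto simp: conv_input_def y_def fun_eq_iff)
    moreover have "j < k" using T(1) that by auto
    ultimately show ?thesis using r(2) r0(2) by metis
  qed
  then have "\<forall>j\<in>T. (\<lambda>m. Share s r j m - Share (\<lambda>_. 0) r0 j m) = 0"
    by (simp add: fun_eq_iff)
  moreover have "word_dot k b (coef i) (\<lambda>j m. Share s r j m - Share (\<lambda>_. 0) r0 j m) = s i" if "i < l" for i
    using recover[OF _ r(1) that, of s] recover[OF _ r0(1) that, of "\<lambda>_. 0"] \<open>i0 < l\<close>
    by (simp add: word_dot_diff_right fvec_def s_def)
  ultimately show ?thesis by (auto simp: s_def)
qed

lemma puncture_independent_of_transformation: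
  fixes Share :: "(nat \<Rightarrow> 'f::field) \<Rightarrow> (nat \<Rightarrow> 'f) \<Rightarrow> nat \<Rightarrow> nat \<Rightarrow> 'f"
  assumes bbt: "black_box_transformation t k k0 l e (\<lambda>_. b) Share \<psi> \<phi>" and "0 < k0"
  shows "\<exists>g :: nat \<Rightarrow> nat \<Rightarrow> nat \<Rightarrow> 'f. puncture_independent k b t l g"
proof -
  from bbt have "all_parties_qualified l e k (\<lambda>_. b) Share"
    by (simp add: black_box_transformation_def)
  then obtain coef :: "nat \<Rightarrow> nat \<Rightarrow> nat \<Rightarrow> 'f" where
    "\<forall>s r. s \<in> fvec l \<longrightarrow> r \<in> fvec e \<longrightarrow> (\<forall>i<l. s i = word_dot k b (coef i) (Share s r))"
    unfolding all_parties_qualified_def word_dot_def by blast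
  then have recover: "\<And>s r i. s \<in> fvec l \<Longrightarrow> r \<in> fvec e \<Longrightarrow> i < l \<Longrightarrow>
      s i = word_dot k b (coef i) (Share s r)"
    by blast
  have "puncture_independent k b t l coef"
    unfolding puncture_independent_def
  proof (intro allI impI)
    fix T a i0 assume T: "T \<subseteq> {..<k}" "card T \<le> t"
      and vanish: "\<forall>j. j \<notin> T \<longrightarrow> lincomb k b l coef a j = 0" and "i0 < l"
    obtain \<Delta> where \<Delta>: "\<forall>j\<in>T. \<Delta> j = 0" "\<forall>i<l. word_dot k b (coef i) \<Delta> = (if i = i0 then 1 else 0)"
      using privacy_vector[OF bbt \<open>0 < k0\<close> recover T \<open>i0 < l\<close>] by blast
    have "a i0 = (\<Sum>i<l. a i * word_dot k b (coef i) \<Delta>)"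
      using \<Delta>(2) \<open>i0 < l\<close> by (simp add: if_distrib[of "\<lambda>c. _ * c"] cong: if_cong)
    also have "\<dots> = word_dot k b (lincomb k b l coef a) \<Delta>"
      by (rule word_dot_lincomb_left[symmetric])
    also have "\<dots> = 0"
    proof -
      have zero: "lincomb k b l coef a j m * \<Delta> j m = 0" for j m
        using vanish \<Delta>(1) by (cases "j \<in> T") auto
      show ?thesis unfolding word_dot_def zero by simp
    qed
    finally show "a i0 = 0" .
  qed
  then show ?thesis by blast
qed

section \<open>From codes to transformations\<close>

lemma t_subsets_enumeration:
  obtains \<tau> where "bij_betw \<tau> {..<k choose t} {S. S \<subseteq> {..<k} \<and> card S = t}"
proof -
  have "card {S. S \<subseteq> {..<k} \<and> card S = t} = k choose t"
    using n_subsets[of "{..<k}" t] by simp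
  then show ?thesis
    using ex_bij_betw_nat_finite[of "{S. S \<subseteq> {..<k} \<and> card S = t}"] that
    by (auto simp: atLeast0LessThan)
qed

lemma card_complements_meeting_le:
  assumes \<tau>: "bij_betw \<tau> {..<k0} {S. S \<subseteq> {..<k} \<and> card S = t}"
    and T: "T \<subseteq> {..<k}" "card T \<le> t" and "t \<le> k"
  shows "card (\<Union>j\<in>T. {v. v < k0 \<and> j \<in> {..<k} - \<tau> v}) \<le> k0 - 1"
proof -
  have "finite T" using T(1) finite_subset by blast
  have "t - card T \<le> card ({..<k} - T)"
    using T \<open>t \<le> k\<close> \<open>finite T\<close> by (simp add: card_Diff_subset)
  then obtain S' where S': "S' \<subseteq> {..<k} - T" "card S' = t - card T" "finite S'"
    by (rule obtain_subset_with_card_n)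
  have "card (T \<union> S') = t"
    using S' T \<open>finite T\<close> by (subst card_Un_disjoint) auto
  moreover have "T \<union> S' \<subseteq> {..<k}" using S' T by auto
  ultimately have "T \<union> S' \<in> \<tau> ` {..<k0}" using \<tau> by (simp add: bij_betw_def)
  then obtain v0 where v0: "v0 < k0" "\<tau> v0 = T \<union> S'" by auto
  have "(\<Union>j\<in>T. {v. v < k0 \<and> j \<in> {..<k} - \<tau> v}) \<subseteq> {..<k0} - {v0}"
    using v0 by auto
  then have "card (\<Union>j\<in>T. {v. v < k0 \<and> j \<in> {..<k} - \<tau> v}) \<le> card ({..<k0} - {v0})"
    by (intro card_mono) auto
  also have "\<dots> = k0 - 1" using v0 by simp
  finally show ?thesis .
qed

lemma card_complements_containing:
  assumes \<tau>: "bij_betw \<tau> {..<k0} {S. S \<subseteq> {..<k} \<and> card S = t}" and "j < k"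
  shows "card {(i, v). i < l \<and> v < k0 \<and> j \<in> {..<k} - \<tau> v} = l * ((k - 1) choose t)"
proof -
  have pairs: "{(i, v). i < l \<and> v < k0 \<and> j \<in> {..<k} - \<tau> v} = {..<l} \<times> {v. v < k0 \<and> j \<notin> \<tau> v}"
    using \<open>j < k\<close> by auto
  have img: "\<tau> ` {v. v < k0 \<and> j \<notin> \<tau> v} = {S. S \<subseteq> {..<k} - {j} \<and> card S = t}"
  proof
    show "\<tau> ` {v. v < k0 \<and> j \<notin> \<tau> v} \<subseteq> {S. S \<subseteq> {..<k} - {j} \<and> card S = t}"
      using \<tau> by (auto simp: bij_betw_def)
    show "{S. S \<subseteq> {..<k} - {j} \<and> card S = t} \<subseteq> \<tau> ` {v. v < k0 \<and> j \<notin> \<tau> v}"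
    proof
      fix S assume S: "S \<in> {S. S \<subseteq> {..<k} - {j} \<and> card S = t}"
      then have "S \<in> \<tau> ` {..<k0}" using \<tau> by (auto simp: bij_betw_def)
      with S show "S \<in> \<tau> ` {v. v < k0 \<and> j \<notin> \<tau> v}" by auto
    qed
  qed
  have "bij_betw \<tau> {v. v < k0 \<and> j \<notin> \<tau> v} {S. S \<subseteq> {..<k} - {j} \<and> card S = t}"
    by (rule bij_betw_subset[OF \<tau> _ img]) auto
  then have "card {v. v < k0 \<and> j \<notin> \<tau> v} = (k - 1) choose t"
    using n_subsets[of "{..<k} - {j}" t] \<open>j < k\<close> by (simp add: bij_betw_same_card)
  then show ?thesis unfolding pairs by (simp add: card_cartesian_product)
qed

definition biorthogonal ::
  "nat \<Rightarrow> nat \<Rightarrow> nat \<Rightarrow> (nat \<Rightarrow> nat \<Rightarrow> nat \<Rightarrow> 'f::comm_ring_1) \<Rightarrow> (nat \<Rightarrow> nat \<Rightarrow> nat \<Rightarrow> 'f) \<Rightarrow> bool"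
  where "biorthogonal k b l g w \<longleftrightarrow>
    (\<forall>i<l. \<forall>i'<l. word_dot k b (g i) (w i') = (if i = i' then 1 else 0))"

lemma sum_biorthogonal:
  "biorthogonal k b l g w \<Longrightarrow> i < l \<Longrightarrow> (\<Sum>i'<l. c i' * word_dot k b (g i) (w i')) = c i"
  by (simp add: biorthogonal_def if_distrib[of "\<lambda>x. _ * x"] cong: if_cong)

lemma dot_on_restrict_right:
  "finite A \<Longrightarrow> J \<subseteq> A \<Longrightarrow> dot_on A f (\<lambda>x. if x \<in> J then u x else 0) = dot_on J f u"
  by (simp add: dot_on_def if_distrib[of "\<lambda>c. _ * c"] Int_absorb1 flip: sum.inter_restrict cong: if_cong)

lemma biorthogonal_words_avoiding:
  fixes g :: "nat \<Rightarrow> nat \<Rightarrow> nat \<Rightarrow> 'f::field"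
  assumes indep: "puncture_independent k b t l g" and S: "S \<subseteq> {..<k}" "card S \<le> t"
  shows "\<exists>w. biorthogonal k b l g w \<and> (\<forall>i. w i \<in> code_space k b \<and> (\<forall>j\<in>S. w i j = 0))"
proof -
  define J where "J = ({..<k} - S) \<times> {..<b}"
  have "finite J" by (simp add: J_def)
  have indep_on_J: "\<forall>i<l. a i = 0" if "\<forall>p\<in>J. (\<Sum>i<l. a i * g i (fst p) (snd p)) = 0" for a
  proof -
    have "lincomb k b l g a j = 0" if "j \<notin> S" for j
      using that \<open>\<forall>p\<in>J. _\<close> by (auto simp: lincomb_def J_def fun_eq_iff)
    then show ?thesis using indep S unfolding puncture_independent_def by blast
  qed
  obtain u where
    u: "\<forall>i<l. \<forall>i'<l. dot_on J (\<lambda>p. g i (fst p) (snd p)) (u i') = (if i = i' then 1 else 0)"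
    using dual_basis_exists[where \<rho> = "\<lambda>i p. g i (fst p) (snd p)", OF \<open>finite J\<close> indep_on_J] by blast
  define w where "w i j m = (if (j, m) \<in> J then u i (j, m) else 0)" for i j m
  have "word_dot k b (g i) (w i') = dot_on J (\<lambda>p. g i (fst p) (snd p)) (u i')" for i i'
  proof -
    have "J \<subseteq> {..<k} \<times> {..<b}" by (auto simp: J_def)
    then show ?thesis unfolding word_dot_as_dot_on w_def by (simp add: dot_on_restrict_right)
  qed
  then have "biorthogonal k b l g w" using u by (simp add: biorthogonal_def)
  moreover have "w i \<in> code_space k b \<and> (\<forall>j\<in>S. w i j = 0)" for i
    by (auto simp: w_def J_def code_space_def fvec_def fun_eq_iff)
  ultimately show ?thesis by blast
qed

definition unflatten :: "nat \<Rightarrow> nat \<Rightarrow> (nat \<Rightarrow> 'f::zero) \<Rightarrow> nat \<Rightarrow> nat \<Rightarrow> 'f"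
  where "unflatten k b r j m = (if j < k \<and> m < b then r (j * b + m) else 0)"

definition flatten :: "nat \<Rightarrow> nat \<Rightarrow> (nat \<Rightarrow> nat \<Rightarrow> 'f::zero) \<Rightarrow> nat \<Rightarrow> 'f"
  where "flatten k b x n = (if n < k * b then x (n div b) (n mod b) else 0)"

lemma flatten_in_fvec: "flatten k b x \<in> fvec (k * b)"
  by (simp add: flatten_def fvec_def)

lemma unflatten_flatten:
  assumes "x \<in> code_space k b"
  shows "unflatten k b (flatten k b x) = x"
proof (intro ext)
  fix j m
  show "unflatten k b (flatten k b x) j m = x j m"
  proof (cases "j < k \<and> m < b")
    case True
    then have "j * b + m < (j + 1) * b" by simp
    also have "\<dots> \<le> k * b" using True by (intro mult_right_mono) auto
    finally have "j * b + m < k * b" .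
    with True show ?thesis by (simp add: unflatten_def flatten_def)
  next
    case False
    with assms show ?thesis by (cases "j < k") (auto simp: unflatten_def code_space_def fvec_def)
  qed
qed

definition adjusted_share ::
  "nat \<Rightarrow> nat \<Rightarrow> nat \<Rightarrow> (nat \<Rightarrow> nat \<Rightarrow> nat \<Rightarrow> 'f) \<Rightarrow> (nat \<Rightarrow> nat \<Rightarrow> nat \<Rightarrow> 'f) \<Rightarrow>
   (nat \<Rightarrow> 'f) \<Rightarrow> (nat \<Rightarrow> 'f) \<Rightarrow> nat \<Rightarrow> nat \<Rightarrow> 'f::comm_ring_1"
  where "adjusted_share k b l g w s r = (\<lambda>j m. unflatten k b r j m +
    (\<Sum>i<l. (s i - word_dot k b (g i) (unflatten k b r)) * w i j m))"

lemma word_dot_adjusted_share: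
  assumes "biorthogonal k b l g w" "i < l"
  shows "word_dot k b (g i) (adjusted_share k b l g w s r) = s i"
  unfolding adjusted_share_def word_dot_add_right word_dot_sum_right word_dot_scale_right
  by (simp add: sum_biorthogonal[OF assms])

lemma adjusted_share_flatten:
  assumes "x \<in> code_space k b" "\<forall>i<l. word_dot k b (g i) x = s i"
  shows "adjusted_share k b l g w s (flatten k b x) = x"
  using assms by (simp add: adjusted_share_def unflatten_flatten)

lemma lmsss_linear_adjusted_share:
  fixes g :: "nat \<Rightarrow> nat \<Rightarrow> nat \<Rightarrow> 'f::field"
  assumes "\<forall>i. w i \<in> code_space k b"
  shows "lmsss_linear l (k * b) k (\<lambda>_. b) (adjusted_share k b l g w)"
  unfolding lmsss_linear_def
proof (intro conjI allI impI)
  fix s r j assume "j < k"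
  then show "adjusted_share k b l g w s r j \<in> fvec b"
    using assms by (simp add: adjusted_share_def unflatten_def code_space_def fvec_def)
next
  fix c s r s' r' j
  have un: "unflatten k b (\<lambda>i. c * r i + r' i) = (\<lambda>j m. c * unflatten k b r j m + unflatten k b r' j m :: 'f)"
    by (auto simp: unflatten_def fun_eq_iff)
  have dot: "word_dot k b (g i) (unflatten k b (\<lambda>i. c * r i + r' i)) =
      c * word_dot k b (g i) (unflatten k b r) + word_dot k b (g i) (unflatten k b r')" for i
    by (simp add: un word_dot_add_right word_dot_scale_right)
  show "adjusted_share k b l g w (\<lambda>i. c * s i + s' i) (\<lambda>i. c * r i + r' i) j =
      (\<lambda>m. c * adjusted_share k b l g w s r j m + adjusted_share k b l g w s' r' j m)"
    unfolding adjusted_share_def dot unfolding un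
    by (simp add: fun_eq_iff algebra_simps sum_distrib_left flip: sum.distrib)
qed

lemma all_parties_qualified_adjusted_share:
  "biorthogonal k b l g w \<Longrightarrow> all_parties_qualified l e k (\<lambda>_. b) (adjusted_share k b l g w)"
  unfolding all_parties_qualified_def
  by (rule exI[of _ g]) (simp add: word_dot_adjusted_share flip: word_dot_def)

definition dual_conversion ::
  "nat \<Rightarrow> nat \<Rightarrow> (nat \<Rightarrow> nat \<Rightarrow> nat \<Rightarrow> nat \<Rightarrow> 'f) \<Rightarrow> nat \<Rightarrow> (nat \<times> nat \<Rightarrow> 'f) \<Rightarrow> nat \<Rightarrow> 'f::comm_ring_1"
  where "dual_conversion l k0 W j Y = (\<lambda>m. \<Sum>i<l. \<Sum>v<k0. Y (i, v) * W v i j m)"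

lemma dual_conversion_correct:
  fixes g :: "nat \<Rightarrow> nat \<Rightarrow> nat \<Rightarrow> 'f::field"
  assumes biorth: "\<And>v. v < k0 \<Longrightarrow> biorthogonal k b l g (W v)"
    and W_code: "\<And>v i. v < k0 \<Longrightarrow> W v i \<in> code_space k b"
    and W_held: "\<And>i v j. v < k0 \<Longrightarrow> j \<notin> \<psi> i v \<Longrightarrow> W v i j = 0"
  shows "\<exists>r \<in> fvec (k * b). \<forall>j. dual_conversion l k0 W j (conv_input l k0 \<psi> y j) =
    adjusted_share k b l g w (\<lambda>i. if i < l then \<Sum>v<k0. y i v else 0) r j"
proof -
  define x where "x j m = (\<Sum>i<l. \<Sum>v<k0. y i v * W v i j m)" for j m
  have "dual_conversion l k0 W j (conv_input l k0 \<psi> y j) = x j" for j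
    using W_held by (auto simp: dual_conversion_def conv_input_def x_def fun_eq_iff intro!: sum.cong)
  moreover have "x \<in> code_space k b"
    using W_code by (auto simp: x_def code_space_def fvec_def fun_eq_iff)
  moreover have "word_dot k b (g i) x = (\<Sum>v<k0. y i v)" if "i < l" for i
  proof -
    have "word_dot k b (g i) x = (\<Sum>v<k0. \<Sum>i'<l. y i' v * word_dot k b (g i) (W v i'))"
      unfolding x_def word_dot_sum_right word_dot_scale_right by (rule sum.swap)
    also have "\<dots> = (\<Sum>v<k0. y i v)"
      using sum_biorthogonal[OF biorth that] by simp
    finally show ?thesis .
  qed
  ultimately have "\<forall>j. dual_conversion l k0 W j (conv_input l k0 \<psi> y j) =
    adjusted_share k b l g w (\<lambda>i. if i < l then \<Sum>v<k0. y i v else 0) (flatten k b x) j"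
    by (simp add: adjusted_share_flatten)
  then show ?thesis using flatten_in_fvec by blast
qed

lemma transformation_of_puncture_independent:
  fixes g :: "nat \<Rightarrow> nat \<Rightarrow> nat \<Rightarrow> 'f::field"
  assumes "t \<le> k" and indep: "puncture_independent k b t l g"
  shows "\<exists>e (Share :: (nat \<Rightarrow> 'f) \<Rightarrow> _) \<psi> \<phi>.
    black_box_transformation t k (k choose t) l e (\<lambda>_. b) Share \<psi> \<phi> \<and>
    (\<forall>j<k. conv_input_len l (k choose t) \<psi> j = l * ((k - 1) choose t))"
proof -
  define k0 where "k0 = k choose t"
  obtain \<tau> where \<tau>: "bij_betw \<tau> {..<k0} {S. S \<subseteq> {..<k} \<and> card S = t}"
    unfolding k0_def by (rule t_subsets_enumeration)
  have "\<exists>w. biorthogonal k b l g w \<and> (\<forall>i. w i \<in> code_space k b \<and> (\<forall>j\<in>\<tau> v. w i j = 0))"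
    if "v < k0" for v
    using \<tau> that by (intro biorthogonal_words_avoiding[OF indep]) (auto simp: bij_betw_def)
  then obtain W where W: "\<And>v. v < k0 \<Longrightarrow> biorthogonal k b l g (W v)"
    "\<And>v i. v < k0 \<Longrightarrow> W v i \<in> code_space k b" "\<And>v i j. v < k0 \<Longrightarrow> j \<in> \<tau> v \<Longrightarrow> W v i j = 0"
    by metis
  obtain w0 where w0: "biorthogonal k b l g w0" "\<forall>i. w0 i \<in> code_space k b"
    using biorthogonal_words_avoiding[OF indep, of "{}"] by auto
  define \<psi> :: "nat \<Rightarrow> nat \<Rightarrow> nat set" where "\<psi> i v = {..<k} - \<tau> v" for i v
  define Share where "Share = adjusted_share k b l g w0"
  define \<phi> where "\<phi> = dual_conversion l k0 W"
  have W_held: "W v i j = 0" if "v < k0" "j \<notin> \<psi> i v" for i v j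
    using W(2,3) that by (cases "j < k") (auto simp: \<psi>_def code_space_def)
  have "black_box_transformation t k k0 l (k * b) (\<lambda>_. b) Share \<psi> \<phi>"
    unfolding black_box_transformation_def
  proof (intro conjI)
    show "lmsss_linear l (k * b) k (\<lambda>_. b) Share"
      unfolding Share_def using w0(2) by (rule lmsss_linear_adjusted_share)
    show "all_parties_qualified l (k * b) k (\<lambda>_. b) Share"
      unfolding Share_def using w0(1) by (rule all_parties_qualified_adjusted_share)
    show "\<forall>i<l. \<forall>v<k0. \<psi> i v \<subseteq> {0..<k}" by (auto simp: \<psi>_def)
    show "\<forall>y. \<exists>r \<in> fvec (k * b). \<forall>j<k.
        \<phi> j (conv_input l k0 \<psi> y j) = Share (\<lambda>i. if i < l then \<Sum>v<k0. y i v else 0) r j"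
      unfolding \<phi>_def Share_def using dual_conversion_correct[where W = W and \<psi> = \<psi>, OF W(1,2) W_held] by blast
    show "\<forall>T \<subseteq> {0..<k}. card T \<le> t \<longrightarrow>
        (\<forall>i<l. card (\<Union>j\<in>T. {v. v < k0 \<and> j \<in> \<psi> i v}) \<le> k0 - 1)"
      using card_complements_meeting_le[OF \<tau> _ _ \<open>t \<le> k\<close>] by (simp add: \<psi>_def atLeast0LessThan)
  qed
  moreover have "\<forall>j<k. conv_input_len l k0 \<psi> j = l * ((k - 1) choose t)"
    using card_complements_containing[OF \<tau>] by (simp add: conv_input_len_def \<psi>_def)
  ultimately show ?thesis unfolding k0_def by blast
qed

lemma code_rate_ge_iff:
  assumes "0 < k * b"
  shows "real l / real (k * b) \<le> code_rate k b C \<longleftrightarrow> l \<le> code_vs.dim C"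
proof -
  have "0 < real (k * b)" using assms by simp
  then show ?thesis by (simp add: code_rate_def mult.commute[of b k] divide_le_cancel del: of_nat_mult)
qed

lemma code_exists_iff_puncture_independent:
  assumes "0 < k * b"
  shows "(\<exists>C :: (nat \<Rightarrow> nat \<Rightarrow> 'f::field) set. linear_code k b C \<and>
      code_rate k b C \<ge> real l / real (k * b) \<and> code_distance_ge k C (t + 1))
    \<longleftrightarrow> (\<exists>g :: nat \<Rightarrow> nat \<Rightarrow> nat \<Rightarrow> 'f. puncture_independent k b t l g)"
  unfolding code_rate_ge_iff[OF assms]
proof
  assume "\<exists>C :: (nat \<Rightarrow> nat \<Rightarrow> 'f) set. linear_code k b C \<and> l \<le> code_vs.dim C \<and>
    code_distance_ge k C (t + 1)"
  then show "\<exists>g :: nat \<Rightarrow> nat \<Rightarrow> nat \<Rightarrow> 'f. puncture_independent k b t l g"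
    using puncture_independent_of_code by blast
next
  assume "\<exists>g :: nat \<Rightarrow> nat \<Rightarrow> nat \<Rightarrow> 'f. puncture_independent k b t l g"
  then obtain g :: "nat \<Rightarrow> nat \<Rightarrow> nat \<Rightarrow> 'f" where g: "puncture_independent k b t l g" ..
  have "code_vs.dim (range (lincomb k b l g)) = l"
    using puncture_independent_imp_independent[OF g] by (rule dim_range_lincomb)
  then show "\<exists>C :: (nat \<Rightarrow> nat \<Rightarrow> 'f) set. linear_code k b C \<and> l \<le> code_vs.dim C \<and>
    code_distance_ge k C (t + 1)"
    using linear_code_range_lincomb code_distance_range_lincomb[OF g] by (metis order_refl)
qed

theorem mainTheorem12:
  fixes t k l b :: nat
  assumes "0 < t" "0 < k" "0 < l" "t < k"
    and "real b > real l / real k"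
  shows "((\<exists>e (Share :: (nat \<Rightarrow> 'f::{field,finite}) \<Rightarrow> _) \<psi> \<phi>.
             black_box_transformation t k (k choose t) l e (\<lambda>_. b) Share \<psi> \<phi>)
          \<longleftrightarrow> (\<exists>C :: (nat \<Rightarrow> nat \<Rightarrow> 'f) set. linear_code k b C \<and>
                 code_rate k b C \<ge> real l / real (k * b) \<and> code_distance_ge k C (t + 1)))
       \<and> ((\<exists>C :: (nat \<Rightarrow> nat \<Rightarrow> 'f) set. linear_code k b C \<and>
                 code_rate k b C \<ge> real l / real (k * b) \<and> code_distance_ge k C (t + 1))
          \<longrightarrow> (\<exists>e (Share :: (nat \<Rightarrow> 'f) \<Rightarrow> _) \<psi> \<phi>.
                 black_box_transformation t k (k choose t) l e (\<lambda>_. b) Share \<psi> \<phi> \<and>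
                 (\<forall>j<k. conv_input_len l (k choose t) \<psi> j = l * ((k - 1) choose t))))"
proof -
  have "0 < real l / real k" using assms(2,3) by simp
  then have "0 < k * b" using assms(2,5) by simp
  have "0 < k choose t" using assms(4) by simp
  note from_transformation = puncture_independent_of_transformation[OF _ this]
  note to_transformation = transformation_of_puncture_independent[OF less_imp_le[OF assms(4)]]
  show ?thesis
    unfolding code_exists_iff_puncture_independent[OF \<open>0 < k * b\<close>]
    using from_transformation to_transformation by blast
qed

end
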